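(* Let $D$ be a digraph rooted at $r$, let $v \in V(D) \setminus \{r\}$, and let $L \subseteq D$ be $v$-large. Then for every $I \in \mathcal{G}_L(v)$ there is an $(r,v)$-path-system $\mathcal{P}$ in $L$ such that $\mathcal{P} \setminus \{rv\} \in \mathfrak{P}_D(v) \cap \mathfrak{P}_L(v)$ and $I \subseteq E^+(\mathcal{P})$, where $\mathcal{P} \setminus \{rv\}$ denotes $\mathcal{P}$ with the trivial one-edge path $rv$ removed (if it belongs to $\mathcal{P}$).
   Context: Digraphs have no loops or parallel edges; $H - rv$ denotes $H$ with the edge $rv$ deleted if present. $\mathrm{in}_H(v)$ is the set of edges of $H$ with head $v$. An $(x,y)$-path is a directed path from $x$ to $y$; an $(x,y)$-path-system is a set of pairwise internally disjoint $(x,y)$-paths. $E^+(\mathcal{P})$ is the set of terminal edges of the paths in $\mathcal{P}$. For a digraph $H$ rooted at $r$, $\mathcal{G}_H(v)$ is the set of all $I \subseteq \mathrm{in}_H(v)$ for which there is an $(r,v)$-path-system $\mathcal{P}$ in $H$ with $E^+(\mathcal{P}) = I$. For distinct $x,y$ with $xy \notin E$, an $(x,y)$-separation is a set $S \subseteq V\setminus\{x,y\}$ meeting every $(x,y)$-path. A set of paths $\mathcal{P}$ and a vertex set $S$ are orthogonal if each path of $\mathcal{P}$ meets $S$ in exactly one vertex and $S \subseteq \bigcup_{P\in\mathcal{P}}V(P)$. An $(x,y)$-path-system is Erdős–Menger if some $(x,y)$-separation is orthogonal to it. $\mathfrak{P}_H(v)$ is the set of Erdős–Menger $(r,v)$-path-systems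 in $H - rv$. A spanning subdigraph $L \subseteq D$ is $v$-large if some $\mathcal{P} \in \mathfrak{P}_D(v)$ has all its paths in $L$, and $rv \in E(L)$ whenever $rv \in E(D)$. *)

theory Defs
  imports Main
begin

text \<open>A digraph is a pair (V, E) of a (possibly infinite) vertex set and an edge
  relation. Since there are no parallel edges, an edge is just an ordered pair (tail, head).\<close>

type_synonym 'a digraph = "'a set \<times> ('a \<times> 'a) set"

abbreviation verts :: "'a digraph \<Rightarrow> 'a set" where "verts H \<equiv> fst H"
abbreviation arcs :: "'a digraph \<Rightarrow> ('a \<times> 'a) set" where "arcs H \<equiv> snd H"

definition digraph :: "'a digraph \<Rightarrow> bool" where
  "digraph H \<longleftrightarrow> arcs H \<subseteq> verts H \<times> verts H \<and> (\<forall>x. (x, x) \<notin> arcs H)"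

definition del_edge :: "'a digraph \<Rightarrow> 'a \<Rightarrow> 'a \<Rightarrow> 'a digraph" where
  "del_edge H r v = (verts H, arcs H - {(r, v)})"

definition in_edges :: "'a digraph \<Rightarrow> 'a \<Rightarrow> ('a \<times> 'a) set" where
  "in_edges H v = {e \<in> arcs H. snd e = v}"

definition spanning_sub :: "'a digraph \<Rightarrow> 'a digraph \<Rightarrow> bool" where
  "spanning_sub L D \<longleftrightarrow> verts L = verts D \<and> arcs L \<subseteq> arcs D"

definition is_path :: "'a digraph \<Rightarrow> 'a \<Rightarrow> 'a \<Rightarrow> 'a list \<Rightarrow> bool" where
  "is_path H x y P \<longleftrightarrow> x \<noteq> y \<and> P \<noteq> [] \<and> hd P = x \<and> last P = y \<and> distinct P
     \<and> set P \<subseteq> verts H \<and> (\<forall>i. Suc i < length P \<longrightarrow> (P ! i, P ! Suc i) \<in> arcs H)"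

definition path_system :: "'a digraph \<Rightarrow> 'a \<Rightarrow> 'a \<Rightarrow> 'a list set \<Rightarrow> bool" where
  "path_system H x y \<P> \<longleftrightarrow> (\<forall>P\<in>\<P>. is_path H x y P)
     \<and> (\<forall>P\<in>\<P>. \<forall>Q\<in>\<P>. P \<noteq> Q \<longrightarrow> set P \<inter> set Q \<subseteq> {x, y})"

definition last_edge :: "'a list \<Rightarrow> 'a \<times> 'a" where
  "last_edge P = (last (butlast P), last P)"

definition term_edges :: "'a list set \<Rightarrow> ('a \<times> 'a) set" where
  "term_edges \<P> = last_edge ` \<P>"

definition Gsets :: "'a digraph \<Rightarrow> 'a \<Rightarrow> 'a \<Rightarrow> ('a \<times> 'a) set set" where
  "Gsets H r v = {I. I \<subseteq> in_edges H v \<and> (\<exists>\<P>. path_system H r v \<P> \<and> term_edges \<P> = I)}"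

definition separation :: "'a digraph \<Rightarrow> 'a \<Rightarrow> 'a \<Rightarrow> 'a set \<Rightarrow> bool" where
  "separation H x y S \<longleftrightarrow> x \<noteq> y \<and> (x, y) \<notin> arcs H \<and> S \<subseteq> verts H - {x, y}
     \<and> (\<forall>P. is_path H x y P \<longrightarrow> set P \<inter> S \<noteq> {})"

definition orthogonal :: "'a list set \<Rightarrow> 'a set \<Rightarrow> bool" where
  "orthogonal \<P> S \<longleftrightarrow> (\<forall>P\<in>\<P>. \<exists>!s. s \<in> set P \<inter> S) \<and> S \<subseteq> (\<Union>P\<in>\<P>. set P)"

definition erdos_menger :: "'a digraph \<Rightarrow> 'a \<Rightarrow> 'a \<Rightarrow> 'a list set \<Rightarrow> bool" where
  "erdos_menger H x y \<P> \<longleftrightarrow> path_system H x y \<P> \<and> (\<exists>S. separation H x y S \<and> orthogonal \<P> S)"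

definition EM_sets :: "'a digraph \<Rightarrow> 'a \<Rightarrow> 'a \<Rightarrow> 'a list set set" where
  "EM_sets H r v = {\<P>. erdos_menger (del_edge H r v) r v \<P>}"

definition paths_in :: "'a digraph \<Rightarrow> 'a list set \<Rightarrow> bool" where
  "paths_in L \<P> \<longleftrightarrow> (\<forall>P\<in>\<P>. set P \<subseteq> verts L
     \<and> (\<forall>i. Suc i < length P \<longrightarrow> (P ! i, P ! Suc i) \<in> arcs L))"

definition v_large :: "'a digraph \<Rightarrow> 'a \<Rightarrow> 'a \<Rightarrow> 'a digraph \<Rightarrow> bool" where
  "v_large D r v L \<longleftrightarrow> spanning_sub L D
     \<and> (\<exists>\<P>\<in>EM_sets D r v. paths_in L \<P>)
     \<and> ((r, v) \<in> arcs D \<longrightarrow> (r, v) \<in> arcs L)"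

end

theory Submission
  imports Defs
begin

text \<open>
  Put \<open>H = L - rv\<close>. Largeness of \<open>L\<close> provides an Erdos--Menger system \<open>\<P>\<close> in \<open>H\<close> with an
  orthogonal separation \<open>S\<close>, and \<open>I\<close> is the set of terminal edges of a path system \<open>\<Q>\<close> in \<open>L\<close>.
  Every path \<open>q \<in> \<Q>\<close> other than \<open>rv\<close> meets \<open>S\<close>; behind its last vertex in \<open>S\<close> it can meet a
  path \<open>p \<in> \<P>\<close> only behind the \<open>S\<close>-vertex of \<open>p\<close>, since otherwise the front of \<open>p\<close> and the back
  of \<open>q\<close> would splice to an \<open>(r,v)\<close>-path avoiding \<open>S\<close>. These meetings are the edges of a
  bipartite graph on \<open>\<P> \<union> \<Q>\<close> in which \<open>p\<close> prefers meetings close to \<open>S\<close> and \<open>q\<close> meetings close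
  to \<open>v\<close>. A stable matching (which exists for well-founded preferences by a Knaster--Tarski
  argument) tells every matched \<open>p\<close> to switch to its partner \<open>q\<close> where they meet. Stability makes
  the rerouted paths internally disjoint and forces every \<open>q\<close> to be matched, so all terminal
  edges of \<open>\<Q>\<close> survive; each rerouted path still meets \<open>S\<close> exactly in its old \<open>S\<close>-vertex.
\<close>

definition dominated :: "('e \<Rightarrow> 'm) \<Rightarrow> ('e \<Rightarrow> 'r::order) \<Rightarrow> 'e set \<Rightarrow> 'e set" where
  "dominated f rank X = {e \<in> X. \<exists>e'\<in>X. f e' = f e \<and> rank e' < rank e}"

lemma dominated_mono: "X \<subseteq> Y \<Longrightarrow> dominated f rank X \<subseteq> dominated f rank Y"
  unfolding dominated_def by blast

lemma undominated_inj_on: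
  fixes rank :: "'e \<Rightarrow> 'r::linorder"
  assumes "inj_on (\<lambda>e. (f e, rank e)) X"
  shows "inj_on f (X - dominated f rank X)"
proof (rule inj_onI)
  fix e1 e2 assume e: "e1 \<in> X - dominated f rank X" "e2 \<in> X - dominated f rank X" "f e1 = f e2"
  then have "\<not> rank e1 < rank e2" "\<not> rank e2 < rank e1" unfolding dominated_def by auto
  then show "e1 = e2" using inj_onD[OF assms, of e1 e2] e by (auto simp: linorder_not_less)
qed

lemma dominated_by_undominated:
  fixes rank :: "'e \<Rightarrow> 'r::wellorder"
  assumes "e \<in> dominated f rank X"
  shows "\<exists>e'\<in>X - dominated f rank X. f e' = f e \<and> rank e' < rank e"
proof -
  let ?fibre_rank = "\<lambda>k. \<exists>e'\<in>X. f e' = f e \<and> rank e' = k"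
  obtain e1 where e1: "e1 \<in> X" "f e1 = f e" "rank e1 < rank e"
    using assms unfolding dominated_def by blast
  then have "\<exists>k. ?fibre_rank k" by blast
  then obtain k where "?fibre_rank k" and least: "\<forall>k'<k. \<not> ?fibre_rank k'"
    unfolding exists_least_iff[of ?fibre_rank] by blast
  then obtain e0 where e0: "e0 \<in> X" "f e0 = f e" "rank e0 = k" by blast
  have "e0 \<notin> dominated f rank X" using e0 least unfolding dominated_def by auto
  moreover have "\<not> rank e1 < k" using least e1 by blast
  then have "rank e0 < rank e" using e0(3) e1(3) by simp
  ultimately show ?thesis using e0 by blast
qed

lemma stable_matching_exists:
  fixes E :: "'e set" and man :: "'e \<Rightarrow> 'm" and woman :: "'e \<Rightarrow> 'w"
    and rank_m :: "'e \<Rightarrow> 'r::wellorder" and rank_w :: "'e \<Rightarrow> 's::wellorder"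
  assumes inj_m: "inj_on (\<lambda>e. (man e, rank_m e)) E"
    and inj_w: "inj_on (\<lambda>e. (woman e, rank_w e)) E"
  obtains M where "M \<subseteq> E" "inj_on man M" "inj_on woman M"
    "\<And>e. e \<in> E - M \<Longrightarrow> (\<exists>e'\<in>M. man e' = man e \<and> rank_m e' < rank_m e)
                        \<or> (\<exists>e'\<in>M. woman e' = woman e \<and> rank_w e' < rank_w e)"
proof -
  \<comment> \<open>Fleiner's fixed point: the men offer \<open>B\<close>, the edges not beaten by a better edge of the
    same man in \<open>A\<close>; the women keep \<open>A\<close>, the edges not beaten by a better offer to the same
    woman.\<close>
  define A where "A = lfp (\<lambda>A. E - dominated woman rank_w (E - dominated man rank_m A))"
  define B where "B = E - dominated man rank_m A"
  have "mono (\<lambda>A. E - dominated woman rank_w (E - dominated man rank_m A))"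
    by (intro monoI Diff_mono dominated_mono order_refl)
  then have A: "A = E - dominated woman rank_w B"
    unfolding A_def B_def by (rule lfp_unfold)
  have "dominated man rank_m A \<subseteq> A" "dominated woman rank_w B \<subseteq> B"
    unfolding dominated_def by auto
  then have AB: "A \<inter> B = A - dominated man rank_m A" "A \<inter> B = B - dominated woman rank_w B"
    using A unfolding B_def by auto
  show thesis
  proof
    show "A \<inter> B \<subseteq> E" unfolding B_def by blast
    have "A \<subseteq> E" "B \<subseteq> E" using A unfolding B_def by auto
    show "inj_on man (A \<inter> B)"
      unfolding AB(1) using inj_on_subset[OF inj_m \<open>A \<subseteq> E\<close>] by (rule undominated_inj_on)
    show "inj_on woman (A \<inter> B)"
      unfolding AB(2) using inj_on_subset[OF inj_w \<open>B \<subseteq> E\<close>] by (rule undominated_inj_on)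
    fix e assume "e \<in> E - A \<inter> B"
    then consider "e \<in> dominated man rank_m A" | "e \<in> dominated woman rank_w B"
      using A unfolding B_def by blast
    then show "(\<exists>e'\<in>A \<inter> B. man e' = man e \<and> rank_m e' < rank_m e)
        \<or> (\<exists>e'\<in>A \<inter> B. woman e' = woman e \<and> rank_w e' < rank_w e)"
    proof cases
      case 1
      then show ?thesis unfolding AB(1) by (blast dest: dominated_by_undominated)
    next
      case 2
      then show ?thesis unfolding AB(2) by (blast dest: dominated_by_undominated)
    qed
  qed
qed

lemma in_set_take_conv_nth: "x \<in> set (take a xs) \<longleftrightarrow> (\<exists>k<a. k < length xs \<and> xs ! k = x)"
  by (auto simp: in_set_conv_nth)

lemma in_set_drop_conv_nth: "x \<in> set (drop b xs) \<longleftrightarrow> (\<exists>k\<ge>b. k < length xs \<and> xs ! k = x)"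
proof
  assume "x \<in> set (drop b xs)"
  then obtain m where "m < length (drop b xs)" "drop b xs ! m = x" by (auto simp: in_set_conv_nth)
  then show "\<exists>k\<ge>b. k < length xs \<and> xs ! k = x" by (intro exI[of _ "b + m"]) auto
next
  assume "\<exists>k\<ge>b. k < length xs \<and> xs ! k = x"
  then obtain k where "b \<le> k" "k < length xs" "xs ! k = x" by blast
  then show "x \<in> set (drop b xs)"
    using nth_mem[of "k - b" "drop b xs"] by simp
qed

lemma last_index_in_set:
  assumes "S \<inter> set xs \<noteq> {}"
  obtains m where "m < length xs" "xs ! m \<in> S" "S \<inter> set (drop (Suc m) xs) = {}"
proof -
  define m where "m = Max {k. k < length xs \<and> xs ! k \<in> S}"
  have fin: "finite {k. k < length xs \<and> xs ! k \<in> S}" by simp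
  have "{k. k < length xs \<and> xs ! k \<in> S} \<noteq> {}"
    using assms by (auto simp: in_set_conv_nth)
  then have "m < length xs" "xs ! m \<in> S" using Max_in[OF fin] unfolding m_def by auto
  moreover have "xs ! k \<notin> S" if "Suc m \<le> k" "k < length xs" for k
  proof
    assume "xs ! k \<in> S"
    then have "k \<le> m" using Max_ge[OF fin] that(2) unfolding m_def by blast
    then show False using that(1) by simp
  qed
  then have "S \<inter> set (drop (Suc m) xs) = {}"
    unfolding in_set_drop_conv_nth disjoint_iff by blast
  ultimately show thesis by (rule that)
qed

lemma last_edge_append_drop:
  assumes "Suc b < length ys"
  shows "last_edge (xs @ drop b ys) = last_edge ys"
proof -
  have "butlast (drop b ys) \<noteq> []" "drop b ys \<noteq> []"
    using assms by (metis length_butlast length_drop length_greater_0_conv zero_less_diff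
        diff_diff_left Suc_eq_plus1, simp)
  then show ?thesis
    unfolding last_edge_def using assms by (simp add: butlast_append butlast_drop)
qed

lemma is_path_mono:
  assumes "is_path H x y P" "verts H \<subseteq> verts G" "arcs H \<subseteq> arcs G"
  shows "is_path G x y P"
  using assms unfolding is_path_def by auto

lemma path_system_mono:
  assumes "path_system H x y \<P>" "verts H \<subseteq> verts G" "arcs H \<subseteq> arcs G"
  shows "path_system G x y \<P>"
  using assms(1) is_path_mono[OF _ assms(2,3)] unfolding path_system_def by blast

lemma separation_mono:
  assumes "separation G x y S" "verts H = verts G" "arcs H \<subseteq> arcs G"
  shows "separation H x y S"
  using assms(1,2) is_path_mono[OF _ equalityD1[OF assms(2)] assms(3)] assms(3)
  unfolding separation_def by auto

lemma path_system_common_vertex: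
  assumes "path_system H x y \<P>" "P \<in> \<P>" "P' \<in> \<P>" "z \<in> set P" "z \<in> set P'" "z \<notin> {x, y}"
  shows "P = P'"
  using assms unfolding path_system_def by blast

lemma is_path_nth_eq_first_iff:
  assumes "is_path H x y P" "i < length P"
  shows "P ! i = x \<longleftrightarrow> i = 0"
  using assms nth_eq_iff_index_eq[of P i 0] unfolding is_path_def by (auto simp: hd_conv_nth)

lemma is_path_nth_eq_last_iff:
  assumes "is_path H x y P" "i < length P"
  shows "P ! i = y \<longleftrightarrow> i = length P - 1"
  using assms nth_eq_iff_index_eq[of P i "length P - 1"] unfolding is_path_def
  by (auto simp: last_conv_nth)

lemma is_path_splice:
  assumes P: "is_path H x y P" and Q: "is_path H x y Q"
    and ab: "a < length P" "b < length Q" "P ! a = Q ! b"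
    and disj: "set (take a P) \<inter> set (drop b Q) = {}"
  shows "is_path H x y (take a P @ drop b Q)"
proof (cases "a = 0")
  case True
  then have "Q ! b = x" using ab is_path_nth_eq_first_iff[OF P ab(1)] by simp
  then have "b = 0" using is_path_nth_eq_first_iff[OF Q ab(2)] by simp
  then show ?thesis using True Q by simp
next
  case False
  let ?W = "take a P @ drop b Q"
  have P_arcs: "(P ! i, P ! Suc i) \<in> arcs H" if "Suc i < length P" for i
    using P that unfolding is_path_def by blast
  have "(?W ! k, ?W ! Suc k) \<in> arcs H" if k: "Suc k < length ?W" for k
  proof -
    consider "Suc k < a" | "Suc k = a" | "a \<le> k" by linarith
    then show ?thesis
    proof cases
      case 1
      then have "?W ! k = P ! k" "?W ! Suc k = P ! Suc k" using ab by (simp_all add: nth_append)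
      then show ?thesis using P_arcs 1 ab(1) by simp
    next
      case 2
      then have "?W ! k = P ! k" "?W ! Suc k = P ! Suc k" using ab by (simp_all add: nth_append)
      then show ?thesis using P_arcs[of k] 2 ab(1) by simp
    next
      case 3
      then have "?W ! k = Q ! (b + (k - a))" "?W ! Suc k = Q ! Suc (b + (k - a))"
        using ab by (simp_all add: nth_append Suc_diff_le)
      moreover have "Suc (b + (k - a)) < length Q" using k 3 ab by simp
      ultimately show ?thesis using Q unfolding is_path_def by simp
    qed
  qed
  moreover have "set ?W \<subseteq> verts H"
    using P Q set_take_subset[of a P] set_drop_subset[of b Q] unfolding is_path_def by auto
  moreover have "?W \<noteq> []" "hd ?W = x" "last ?W = y" "distinct ?W" "x \<noteq> y"
    using P Q ab False disj unfolding is_path_def by (simp_all add: hd_append)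
  ultimately show ?thesis unfolding is_path_def by (intro conjI allI impI) simp_all
qed

lemma separation_free_prefix_suffix_disjoint:
  assumes S: "separation H x y S" and P: "is_path H x y P" and Q: "is_path H x y Q"
    and free: "S \<inter> set (take a P) = {}" "S \<inter> set (drop b Q) = {}"
  shows "set (take a P) \<inter> set (drop b Q) = {}"
proof (rule ccontr)
  assume "set (take a P) \<inter> set (drop b Q) \<noteq> {}"
  then have "\<exists>k. k < a \<and> k < length P \<and> P ! k \<in> set (drop b Q)"
    by (fastforce simp: in_set_take_conv_nth)
  then obtain k where k: "k < a" "k < length P" "P ! k \<in> set (drop b Q)"
    and "\<forall>k'<k. \<not> (k' < a \<and> k' < length P \<and> P ! k' \<in> set (drop b Q))"
    using exists_least_iff[of "\<lambda>k. k < a \<and> k < length P \<and> P ! k \<in> set (drop b Q)"]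
    by blast
  then have least: "P ! k' \<notin> set (drop b Q)" if "k' < k" for k'
    using that by simp
  obtain m where m: "b \<le> m" "m < length Q" "Q ! m = P ! k"
    using k(3) unfolding in_set_drop_conv_nth by blast
  have "set (drop m Q) \<subseteq> set (drop b Q)" using m(1) by (rule set_drop_subset_set_drop)
  moreover have "set (take k P) \<subseteq> set (take a P)" using k(1) by (simp add: set_take_subset_set_take)
  moreover have "set (take k P) \<inter> set (drop m Q) = {}"
    using least \<open>set (drop m Q) \<subseteq> set (drop b Q)\<close> by (fastforce simp: in_set_take_conv_nth)
  then have "is_path H x y (take k P @ drop m Q)"
    using is_path_splice[OF P Q k(2) m(2)] m(3) by simp
  then have "S \<inter> set (take k P @ drop m Q) \<noteq> {}" using S unfolding separation_def by blast
  ultimately show False using free by auto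
qed

lemma is_path_del_edge:
  assumes P: "is_path H x y P" and not_edge: "P \<noteq> [x, y]"
  shows "is_path (del_edge H x y) x y P"
proof -
  have "(P ! i, P ! Suc i) \<noteq> (x, y)" if i: "Suc i < length P" for i
  proof
    assume edge: "(P ! i, P ! Suc i) = (x, y)"
    then have "i = 0" using is_path_nth_eq_first_iff[OF P, of i] i by simp
    moreover have "Suc i = length P - 1" using edge is_path_nth_eq_last_iff[OF P i] by simp
    ultimately have "length P = 2" by simp
    then obtain a b where "P = [a, b]" by (auto simp: length_Suc_conv numeral_2_eq_2)
    then show False using not_edge edge \<open>i = 0\<close> by simp
  qed
  then show ?thesis using P unfolding is_path_def del_edge_def by simp
qed

locale separated_path_systems =
  fixes H :: "'a digraph" and r v :: 'a and S :: "'a set" and \<P> \<Q> :: "'a list set"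
  assumes separation: "separation H r v S"
    and P_system: "path_system H r v \<P>" and P_orthogonal: "orthogonal \<P> S"
    and Q_system: "path_system H r v \<Q>"
begin

lemma P_path: "p \<in> \<P> \<Longrightarrow> is_path H r v p"
  using P_system unfolding path_system_def by blast

lemma Q_path: "q \<in> \<Q> \<Longrightarrow> is_path H r v q"
  using Q_system unfolding path_system_def by blast

lemma S_avoids_ends: "r \<notin> S" "v \<notin> S"
  using separation unfolding separation_def by auto

lemma path_meets_S: "is_path H r v p \<Longrightarrow> S \<inter> set p \<noteq> {}"
  using separation unfolding separation_def by blast

lemma P_meets_S_once:
  assumes "p \<in> \<P>" "s \<in> S \<inter> set p" "s' \<in> S \<inter> set p"
  shows "s = s'"
  using P_orthogonal assms unfolding orthogonal_def by blast

definition crossings :: "('a list \<times> nat \<times> 'a list \<times> nat) set" where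
  "crossings = {(p, i, q, j). p \<in> \<P> \<and> q \<in> \<Q> \<and> i < length p \<and> j < length q
     \<and> p ! i = q ! j \<and> p ! i \<notin> {r, v}
     \<and> S \<inter> set (take (Suc i) p) \<noteq> {} \<and> S \<inter> set (drop (Suc j) q) = {}}"

lemma crossing_determined_by_P:
  assumes "(p, i, q, j) \<in> crossings" "(p, i, q', j') \<in> crossings"
  shows "q = q' \<and> j = j'"
proof -
  have "q = q'"
    using assms path_system_common_vertex[OF Q_system, of q q' "p ! i"] nth_mem
    unfolding crossings_def by force
  moreover have "distinct q" using assms Q_path unfolding crossings_def is_path_def by blast
  ultimately show ?thesis
    using assms nth_eq_iff_index_eq[of q j j'] unfolding crossings_def by auto
qed

lemma crossing_determined_by_Q:
  assumes "(p, i, q, j) \<in> crossings" "(p', i', q, j) \<in> crossings"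
  shows "p = p' \<and> i = i'"
proof -
  have "p = p'"
    using assms path_system_common_vertex[OF P_system, of p p' "q ! j"] nth_mem
    unfolding crossings_def by force
  moreover have "distinct p" using assms P_path unfolding crossings_def is_path_def by blast
  ultimately show ?thesis
    using assms nth_eq_iff_index_eq[of p i i'] unfolding crossings_def by auto
qed

lemma crossingI_suffix_free:
  assumes p: "p \<in> \<P>" "k < length p" and q: "q \<in> \<Q>" "m < length q"
    and meet: "p ! k = q ! m" "p ! k \<notin> {r, v}" and free: "S \<inter> set (drop m q) = {}"
  shows "(p, k, q, m) \<in> crossings"
proof -
  have "p ! k \<in> set (take (Suc k) p)" "p ! k \<in> set (drop m q)"
    using p(2) q(2) meet(1) by (auto simp: in_set_take_conv_nth in_set_drop_conv_nth)
  then have "S \<inter> set (take (Suc k) p) \<noteq> {}"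
    using separation_free_prefix_suffix_disjoint[OF separation P_path[OF p(1)] Q_path[OF q(1)] _ free]
    by blast
  moreover have "S \<inter> set (drop (Suc m) q) = {}"
    using free set_drop_subset_set_drop[of m "Suc m" q] by auto
  ultimately show ?thesis unfolding crossings_def using assms by auto
qed

end

locale stable_crossing_matching = separated_path_systems +
  fixes M :: "('a list \<times> nat \<times> 'a list \<times> nat) set"
  assumes M_crossings: "M \<subseteq> crossings"
    and M_unique_P: "(p, i, q, j) \<in> M \<Longrightarrow> (p, i', q', j') \<in> M \<Longrightarrow> i = i' \<and> q = q' \<and> j = j'"
    and M_unique_Q: "(p, i, q, j) \<in> M \<Longrightarrow> (p', i', q, j') \<in> M \<Longrightarrow> p = p' \<and> i = i' \<and> j = j'"
    and M_stable: "(p, i, q, j) \<in> crossings - M \<Longrightarrow>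
       (\<exists>i' q' j'. (p, i', q', j') \<in> M \<and> i' < i) \<or> (\<exists>p' i' j'. (p', i', q, j') \<in> M \<and> j < j')"
begin

lemma M_crossingD:
  assumes "(p, i, q, j) \<in> M"
  shows "p \<in> \<P>" "q \<in> \<Q>" "i < length p" "j < length q" "p ! i = q ! j" "p ! i \<notin> {r, v}"
    "S \<inter> set (take (Suc i) p) \<noteq> {}" "S \<inter> set (drop (Suc j) q) = {}"
  using assms M_crossings unfolding crossings_def by auto

definition before_crossing :: "'a list \<Rightarrow> nat \<Rightarrow> bool" where
  "before_crossing p k \<longleftrightarrow> k < length p \<and> (\<forall>i q j. (p, i, q, j) \<in> M \<longrightarrow> k < i)"

definition rerouted :: "'a list \<Rightarrow> 'a list" where
  "rerouted p = (if \<exists>i q j. (p, i, q, j) \<in> M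
     then (case SOME (i, q, j). (p, i, q, j) \<in> M of (i, q, j) \<Rightarrow> take i p @ drop j q)
     else p)"

lemma rerouted_matched:
  assumes "(p, i, q, j) \<in> M"
  shows "rerouted p = take i p @ drop j q"
proof -
  obtain i' q' j' where some: "(SOME (i, q, j). (p, i, q, j) \<in> M) = (i', q', j')"
    by (metis prod_cases3)
  have "(p, i', q', j') \<in> M"
    using someI[of "\<lambda>(i, q, j). (p, i, q, j) \<in> M" "(i, q, j)"] assms some by simp
  then have "i' = i \<and> q' = q \<and> j' = j" using M_unique_P assms by blast
  then show ?thesis using assms some unfolding rerouted_def by auto
qed

lemma rerouted_unmatched: "\<not> (\<exists>i q j. (p, i, q, j) \<in> M) \<Longrightarrow> rerouted p = p"
  unfolding rerouted_def by simp

lemma before_crossing_meets_new_suffix_only_at_v: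
  assumes p: "p \<in> \<P>" and k: "before_crossing p k" and m': "(p', i', q', j') \<in> M"
    and m: "j' \<le> m" "m < length q'" "p ! k = q' ! m"
  shows "p ! k = v"
proof (rule ccontr)
  assume not_v: "p ! k \<noteq> v"
  have k_len: "k < length p" and k_before: "\<And>i q j. (p, i, q, j) \<in> M \<Longrightarrow> k < i"
    using k unfolding before_crossing_def by auto
  note c' = M_crossingD[OF m']
  show False
  proof (cases "m = j'")
    case True
    then have "p ! k \<in> set p'" "p ! k \<notin> {r, v}" using c' m nth_mem[OF c'(3)] by auto
    then have "p = p'"
      using path_system_common_vertex[OF P_system p c'(1) nth_mem[OF k_len]] by blast
    then have "k = i'"
      using nth_eq_iff_index_eq[of p k i'] P_path[OF p] c' m True k_len
      unfolding is_path_def by auto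
    then show False using k_before m' \<open>p = p'\<close> by blast
  next
    case False
    then have "j' < m" using m(1) by simp
    then have "S \<inter> set (drop m q') = {}"
      using c'(8) set_drop_subset_set_drop[of "Suc j'" m q'] by auto
    moreover have "p ! k \<noteq> r"
      using is_path_nth_eq_first_iff[OF Q_path[OF c'(2)] m(2)] m \<open>j' < m\<close> by simp
    ultimately have "(p, k, q', m) \<in> crossings"
      using crossingI_suffix_free[OF p k_len c'(2) m(2,3)] not_v by blast
    moreover have "(p, k, q', m) \<notin> M" using M_unique_Q[OF m'] \<open>j' < m\<close> by force
    ultimately show False
      using M_stable[of p k q' m] k_before M_unique_Q[OF m'] \<open>j' < m\<close> by force
  qed
qed

lemma rerouted_vertex_cases:
  assumes "x \<in> set (rerouted p)"
  obtains k where "before_crossing p k" "p ! k = x"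
    | i q j m where "(p, i, q, j) \<in> M" "j \<le> m" "m < length q" "q ! m = x"
proof (cases "\<exists>i q j. (p, i, q, j) \<in> M")
  case True
  then obtain i q j where e: "(p, i, q, j) \<in> M" by blast
  then have "x \<in> set (take i p) \<or> x \<in> set (drop j q)" using assms rerouted_matched by auto
  then show thesis
  proof
    assume "x \<in> set (take i p)"
    then obtain k where k: "k < i" "k < length p" "p ! k = x" by (auto simp: in_set_take_conv_nth)
    then have "before_crossing p k" using M_unique_P[OF e] unfolding before_crossing_def by blast
    then show thesis using that(1) k by blast
  next
    assume "x \<in> set (drop j q)"
    then show thesis using that(2) e by (auto simp: in_set_drop_conv_nth)
  qed
next
  case False
  then have "x \<in> set p" using assms rerouted_unmatched by simp
  then obtain k where "k < length p" "p ! k = x" by (auto simp: in_set_conv_nth)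
  then show thesis using that(1) False unfolding before_crossing_def by blast
qed

lemma rerouted_path:
  assumes p: "p \<in> \<P>"
  shows "is_path H r v (rerouted p)"
proof (cases "\<exists>i q j. (p, i, q, j) \<in> M")
  case True
  then obtain i q j where e: "(p, i, q, j) \<in> M" by blast
  note c = M_crossingD[OF e]
  have "set (take i p) \<inter> set (drop j q) = {}"
  proof (rule ccontr)
    assume "set (take i p) \<inter> set (drop j q) \<noteq> {}"
    then obtain k m where k: "k < i" "k < length p" and m: "j \<le> m" "m < length q" "p ! k = q ! m"
      by (fastforce simp: in_set_take_conv_nth in_set_drop_conv_nth)
    have "before_crossing p k" using M_unique_P[OF e] k unfolding before_crossing_def by blast
    then have "p ! k = v" using before_crossing_meets_new_suffix_only_at_v[OF p _ e m] by blast
    then have "k = length p - 1" using is_path_nth_eq_last_iff[OF P_path[OF p] k(2)] by simp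
    then show False using k c(3) by simp
  qed
  then show ?thesis
    using rerouted_matched[OF e] is_path_splice[OF P_path[OF p] Q_path[OF c(2)] c(3-5)] by simp
next
  case False
  then show ?thesis using rerouted_unmatched P_path[OF p] by simp
qed

lemma rerouted_S_vertices: "S \<inter> set (rerouted p) \<subseteq> set p"
proof
  fix x assume x: "x \<in> S \<inter> set (rerouted p)"
  then have "x \<in> set (rerouted p)" by blast
  then show "x \<in> set p"
  proof (cases rule: rerouted_vertex_cases)
    case (1 k)
    then show ?thesis unfolding before_crossing_def by auto
  next
    case (2 i q j m)
    note c = M_crossingD[OF 2(1)]
    show ?thesis
    proof (cases "m = j")
      case True
      then show ?thesis using 2 c(3,5) nth_mem by metis
    next
      case False
      then have "x \<in> set (drop (Suc j) q)"
        unfolding in_set_drop_conv_nth using 2 by (intro exI[of _ m]) auto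
      then show ?thesis using x c(8) by blast
    qed
  qed
qed

lemma rerouted_disjoint:
  assumes p: "p \<in> \<P>" "p' \<in> \<P>" "p \<noteq> p'"
    and x: "x \<in> set (rerouted p)" "x \<in> set (rerouted p')"
  shows "x \<in> {r, v}"
proof (rule ccontr)
  assume inner: "x \<notin> {r, v}"
  have no_front_back: False
    if "p1 \<in> \<P>" "before_crossing p1 k" "p1 ! k = x"
      "(p2, i, q, j) \<in> M" "j \<le> m" "m < length q" "q ! m = x" for p1 k p2 i q j m
    using before_crossing_meets_new_suffix_only_at_v[OF that(1,2,4-6)] that(3,7) inner by auto
  show False
  proof (cases rule: rerouted_vertex_cases[OF x(1)])
    case (1 k)
    then show False
    proof (cases rule: rerouted_vertex_cases[OF x(2)])
      case (1 k')
      then have "x \<in> set p" "x \<in> set p'"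
        using \<open>before_crossing p k\<close> \<open>p ! k = x\<close> nth_mem unfolding before_crossing_def by metis+
      then show False using path_system_common_vertex[OF P_system p(1,2)] inner p(3) by blast
    next
      case (2 i q j m)
      then show False using no_front_back p(1) \<open>before_crossing p k\<close> \<open>p ! k = x\<close> by blast
    qed
  next
    case (2 i q j m)
    then show False
    proof (cases rule: rerouted_vertex_cases[OF x(2)])
      case (1 k')
      then show False using no_front_back p(2) 2 by blast
    next
      case (2 i' q' j' m')
      then have "q \<noteq> q'" using M_unique_Q \<open>(p, i, q, j) \<in> M\<close> p(3) by blast
      moreover have "x \<in> set q" "x \<in> set q'"
        using 2 \<open>m < length q\<close> \<open>q ! m = x\<close> nth_mem by metis+
      ultimately show False
        using path_system_common_vertex[OF Q_system M_crossingD(2)[OF \<open>(p, i, q, j) \<in> M\<close>]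
            M_crossingD(2)[OF 2(1)]] inner by blast
    qed
  qed
qed

lemma Q_matched:
  assumes q: "q \<in> \<Q>"
  shows "\<exists>p i j. (p, i, q, j) \<in> M"
proof (rule ccontr)
  assume unmatched: "\<not> (\<exists>p i j. (p, i, q, j) \<in> M)"
  obtain m where m: "m < length q" "q ! m \<in> S" "S \<inter> set (drop (Suc m) q) = {}"
    by (rule last_index_in_set[OF path_meets_S[OF Q_path[OF q]]])
  then obtain p where p: "p \<in> \<P>" "q ! m \<in> set p"
    using P_orthogonal unfolding orthogonal_def by blast
  then obtain k where k: "k < length p" "p ! k = q ! m" by (auto simp: in_set_conv_nth)
  then have "p ! k \<in> S \<inter> set (take (Suc k) p)" using m(2) by (auto simp: in_set_take_conv_nth)
  then have "(p, k, q, m) \<in> crossings"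
    unfolding crossings_def using p(1) q k m S_avoids_ends by auto
  then obtain i' q' j' where e: "(p, i', q', j') \<in> M" "i' < k"
    using M_stable[of p k q m] unmatched by blast
  then obtain s where "s \<in> S \<inter> set (take (Suc i') p)" using M_crossingD(7) by blast
  then obtain k' where k': "k' < Suc i'" "k' < length p" "p ! k' \<in> S"
    by (auto simp: in_set_take_conv_nth)
  then have "p ! k' = p ! k"
    using P_meets_S_once[OF p(1), of "p ! k'" "p ! k"] k m(2) p(2) nth_mem by auto
  then have "k' = k"
    using nth_eq_iff_index_eq[of p k' k] P_path[OF p(1)] k k' unfolding is_path_def by auto
  then show False using k' e(2) by simp
qed

lemma rerouted_path_system: "path_system H r v (rerouted ` \<P>)"
  unfolding path_system_def using rerouted_path rerouted_disjoint by fastforce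

lemma rerouted_orthogonal: "orthogonal (rerouted ` \<P>) S"
  unfolding orthogonal_def
proof (intro conjI ballI subsetI)
  fix P assume "P \<in> rerouted ` \<P>"
  then obtain p where p: "p \<in> \<P>" "P = rerouted p" by blast
  then have "S \<inter> set P \<noteq> {}" using path_meets_S rerouted_path by blast
  moreover have "S \<inter> set P \<subseteq> S \<inter> set p" using rerouted_S_vertices p(2) by blast
  ultimately show "\<exists>!s. s \<in> set P \<inter> S" using P_meets_S_once[OF p(1)] by blast
next
  fix s assume s: "s \<in> S"
  then obtain p where p: "p \<in> \<P>" "s \<in> set p"
    using P_orthogonal unfolding orthogonal_def by blast
  obtain s' where "s' \<in> S \<inter> set (rerouted p)" using path_meets_S rerouted_path[OF p(1)] by blast
  moreover then have "s' = s" using rerouted_S_vertices P_meets_S_once[OF p(1)] s p(2) by blast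
  ultimately show "s \<in> (\<Union>P\<in>rerouted ` \<P>. set P)" using p(1) by blast
qed

lemma rerouted_term_edges: "term_edges \<Q> \<subseteq> term_edges (rerouted ` \<P>)"
proof
  fix e assume "e \<in> term_edges \<Q>"
  then obtain q where q: "q \<in> \<Q>" "e = last_edge q" unfolding term_edges_def by blast
  then obtain p i j where m: "(p, i, q, j) \<in> M" using Q_matched by blast
  note c = M_crossingD[OF m]
  have "j \<noteq> length q - 1" using is_path_nth_eq_last_iff[OF Q_path[OF q(1)] c(4)] c(5,6) by simp
  then have "Suc j < length q" using c(4) by linarith
  then have "last_edge (rerouted p) = last_edge q"
    by (simp add: rerouted_matched[OF m] last_edge_append_drop)
  then show "e \<in> term_edges (rerouted ` \<P>)"
    unfolding term_edges_def image_image using q(2) c(1) by force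
qed

end

lemma (in separated_path_systems) stable_crossing_matching_exists:
  "\<exists>M. stable_crossing_matching H r v S \<P> \<Q> M"
proof -
  define P_of :: "'a list \<times> nat \<times> 'a list \<times> nat \<Rightarrow> 'a list" where "P_of = (\<lambda>(p, i, q, j). p)"
  define P_rank :: "'a list \<times> nat \<times> 'a list \<times> nat \<Rightarrow> nat" where "P_rank = (\<lambda>(p, i, q, j). i)"
  define Q_of :: "'a list \<times> nat \<times> 'a list \<times> nat \<Rightarrow> 'a list" where "Q_of = (\<lambda>(p, i, q, j). q)"
  define Q_rank :: "'a list \<times> nat \<times> 'a list \<times> nat \<Rightarrow> nat" where "Q_rank = (\<lambda>(p, i, q, j). length q - j)"
  have "inj_on (\<lambda>e. (P_of e, P_rank e)) crossings"
  proof (rule inj_onI)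
    fix e e' assume "e \<in> crossings" "e' \<in> crossings" "(P_of e, P_rank e) = (P_of e', P_rank e')"
    then show "e = e'"
      using crossing_determined_by_P unfolding P_of_def P_rank_def by (cases e; cases e') auto
  qed
  moreover have "inj_on (\<lambda>e. (Q_of e, Q_rank e)) crossings"
  proof (rule inj_onI)
    fix e e' assume e: "e \<in> crossings" "e' \<in> crossings" and eq: "(Q_of e, Q_rank e) = (Q_of e', Q_rank e')"
    obtain p i q j p' i' q' j' where tuples: "e = (p, i, q, j)" "e' = (p', i', q', j')"
      using prod_cases4 by metis
    have "j < length q" "j' < length q'" using e unfolding tuples crossings_def by auto
    then have "q = q'" "j = j'" using eq unfolding tuples Q_of_def Q_rank_def by auto
    then show "e = e'" using crossing_determined_by_Q e unfolding tuples by blast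
  qed
  ultimately obtain M where M: "M \<subseteq> crossings" "inj_on P_of M" "inj_on Q_of M"
    and stable: "\<And>e. e \<in> crossings - M \<Longrightarrow> (\<exists>e'\<in>M. P_of e' = P_of e \<and> P_rank e' < P_rank e)
                             \<or> (\<exists>e'\<in>M. Q_of e' = Q_of e \<and> Q_rank e' < Q_rank e)"
    by (rule stable_matching_exists) blast
  have "stable_crossing_matching H r v S \<P> \<Q> M"
  proof
    show "M \<subseteq> crossings" by (fact M(1))
    show "i = i' \<and> q = q' \<and> j = j'" if "(p, i, q, j) \<in> M" "(p, i', q', j') \<in> M" for p i q j i' q' j'
      using inj_onD[OF M(2) _ that] unfolding P_of_def by simp
    show "p = p' \<and> i = i' \<and> j = j'" if "(p, i, q, j) \<in> M" "(p', i', q, j') \<in> M" for p i q j p' i' j'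
      using inj_onD[OF M(3) _ that] unfolding Q_of_def by simp
    show "(\<exists>i' q' j'. (p, i', q', j') \<in> M \<and> i' < i) \<or> (\<exists>p' i' j'. (p', i', q, j') \<in> M \<and> j < j')"
      if "(p, i, q, j) \<in> crossings - M" for p i q j
      using stable[OF that] that M(1) unfolding crossings_def P_of_def P_rank_def Q_of_def Q_rank_def
      by fastforce
  qed
  then show ?thesis ..
qed

lemma (in separated_path_systems) orthogonal_system_covering_term_edges:
  obtains \<P>' where "path_system H r v \<P>'" "orthogonal \<P>' S" "term_edges \<Q> \<subseteq> term_edges \<P>'"
proof -
  obtain M where "stable_crossing_matching H r v S \<P> \<Q> M"
    using stable_crossing_matching_exists by blast
  then interpret stable_crossing_matching H r v S \<P> \<Q> M .
  show thesis using that rerouted_path_system rerouted_orthogonal rerouted_term_edges by blast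
qed

lemma path_system_del_edge:
  assumes "path_system L r v \<Q>"
  shows "path_system (del_edge L r v) r v (\<Q> - {[r, v]})"
  unfolding path_system_def
proof (intro conjI ballI impI)
  fix q assume "q \<in> \<Q> - {[r, v]}"
  then show "is_path (del_edge L r v) r v q"
    using assms unfolding path_system_def by (blast intro: is_path_del_edge)
qed (use assms in \<open>auto simp: path_system_def\<close>)

lemma path_system_del_edge_if_paths_in:
  assumes "path_system (del_edge D r v) r v \<P>" "paths_in L \<P>"
  shows "path_system (del_edge L r v) r v \<P>"
  using assms unfolding path_system_def is_path_def paths_in_def del_edge_def by auto

lemma direct_path_notin_del_edge: "path_system (del_edge L r v) r v \<P> \<Longrightarrow> [r, v] \<notin> \<P>"
  unfolding path_system_def is_path_def del_edge_def by fastforce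

lemma path_system_add_direct_path:
  assumes "path_system (del_edge L r v) r v \<P>" "path_system L r v \<Q>"
  shows "path_system L r v (\<P> \<union> (\<Q> \<inter> {[r, v]}))"
proof -
  have "path_system L r v \<P>"
    using assms(1) by (rule path_system_mono) (auto simp: del_edge_def)
  then show ?thesis using assms(2) unfolding path_system_def by auto
qed

lemma EM_sets_of_spanning_sub:
  assumes "spanning_sub L D" "path_system (del_edge L r v) r v \<P>" "orthogonal \<P> S"
    and "separation (del_edge D r v) r v S"
  shows "\<P> \<in> EM_sets D r v \<inter> EM_sets L r v"
proof -
  have "verts (del_edge L r v) = verts (del_edge D r v)" "arcs (del_edge L r v) \<subseteq> arcs (del_edge D r v)"
    using assms(1) unfolding spanning_sub_def del_edge_def by auto
  then show ?thesis
    using assms(2-4) path_system_mono[OF assms(2)] separation_mono[OF assms(4)]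
    unfolding EM_sets_def erdos_menger_def by blast
qed

theorem corollary2p6:
  fixes D L :: "'a digraph" and r v :: 'a
  assumes "digraph D"
    and "r \<in> verts D"
    and "v \<in> verts D - {r}"
    and "v_large D r v L"
  shows "\<forall>I \<in> Gsets L r v. \<exists>\<P>. path_system L r v \<P>
           \<and> \<P> - {[r, v]} \<in> EM_sets D r v \<inter> EM_sets L r v
           \<and> I \<subseteq> term_edges \<P>"
proof
  fix I assume "I \<in> Gsets L r v"
  then obtain \<Q> where Q: "path_system L r v \<Q>" "term_edges \<Q> = I" unfolding Gsets_def by blast
  from assms(4) obtain \<P> S where sub: "spanning_sub L D"
    and P: "path_system (del_edge D r v) r v \<P>" "paths_in L \<P>"
    and S: "separation (del_edge D r v) r v S" "orthogonal \<P> S"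
    unfolding v_large_def EM_sets_def erdos_menger_def by blast
  have "separation (del_edge L r v) r v S"
    by (rule separation_mono[OF S(1)]) (use sub in \<open>auto simp: spanning_sub_def del_edge_def\<close>)
  then interpret separated_path_systems "del_edge L r v" r v S \<P> "\<Q> - {[r, v]}"
    using path_system_del_edge_if_paths_in[OF P] S(2) path_system_del_edge[OF Q(1)]
    by unfold_locales
  obtain \<P>' where P': "path_system (del_edge L r v) r v \<P>'" "orthogonal \<P>' S"
      "term_edges (\<Q> - {[r, v]}) \<subseteq> term_edges \<P>'"
    by (rule orthogonal_system_covering_term_edges)
  have "(\<P>' \<union> (\<Q> \<inter> {[r, v]})) - {[r, v]} = \<P>'"
    using direct_path_notin_del_edge[OF P'(1)] by blast
  moreover have "I \<subseteq> term_edges (\<P>' \<union> (\<Q> \<inter> {[r, v]}))"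
    using Q(2) P'(3) unfolding term_edges_def by blast
  ultimately show "\<exists>\<P>. path_system L r v \<P> \<and> \<P> - {[r, v]} \<in> EM_sets D r v \<inter> EM_sets L r v
      \<and> I \<subseteq> term_edges \<P>"
    using path_system_add_direct_path[OF P'(1) Q(1)] EM_sets_of_spanning_sub[OF sub P'(1,2) S(1)]
    by metis
qed

end
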